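(* Let $T$ be an automorphism (not necessarily ergodic) of a standard probability space $(X,\mathcal B,\mu)$ and let $P\in QF(T,\mu)$ be a quasi-factor. Then the system $(M(X),P,T_* )$ is isomorphic to the factor of $(X^{\mathbb Z},\overline P^\infty,T^\infty)$ determined by the $\sigma$-algebra of symmetric sets (sets invariant under all finite permutations of coordinates).
   Context: $M(X)$ is the set of Borel probability measures on $X$ with the standard Borel structure generated by $\nu\mapsto\nu(A)$, $A\in\mathcal B$; $T$ acts on $M(X)$ by $T_*\nu=\nu\circ T^{-1}$. A quasi-factor of $(X,\mathcal B,\mu,T)$ is a probability measure $P$ on $M(X)$ invariant under $T_*$ whose barycenter $\int_{M(X)}\nu\,dP(\nu)$ equals $\mu$; $QF(T,\mu)$ is the set of these. $T^\infty$ is the diagonal action $(x_n)_n\mapsto(Tx_n)_n$ on $X^{\mathbb Z}$, and $\overline P^\infty=\int_{M(X)}\theta^{\otimes\mathbb Z}\,dP(\theta)$. *)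

theory Defs
  imports "HOL-Probability.Probability"
begin

text \<open>Standard Borel space: Borel-isomorphic to a Borel subset of the real line
  (equivalently, to a Borel subset of a Polish space).\<close>
definition standard_borel :: "'a measure \<Rightarrow> bool" where
  "standard_borel M \<longleftrightarrow>
     (\<exists>B f g. B \<in> sets (borel :: real measure) \<and>
        f \<in> M \<rightarrow>\<^sub>M restrict_space borel B \<and>
        g \<in> restrict_space borel B \<rightarrow>\<^sub>M M \<and>
        (\<forall>x\<in>space M. g (f x) = x) \<and> (\<forall>y\<in>B. f (g y) = y))"

definition standard_prob_space :: "'a measure \<Rightarrow> bool" where
  "standard_prob_space M \<longleftrightarrow> prob_space M \<and> standard_borel M"

definition automorphism :: "'a measure \<Rightarrow> ('a \<Rightarrow> 'a) \<Rightarrow> bool" where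
  "automorphism M T \<longleftrightarrow>
     bij_betw T (space M) (space M) \<and>
     T \<in> M \<rightarrow>\<^sub>M M \<and> the_inv_into (space M) T \<in> M \<rightarrow>\<^sub>M M \<and>
     distr M M T = M"

definition push :: "'a measure \<Rightarrow> ('a \<Rightarrow> 'a) \<Rightarrow> 'a measure \<Rightarrow> 'a measure" where
  "push M T \<nu> = distr \<nu> M T"

definition QF :: "'a measure \<Rightarrow> ('a \<Rightarrow> 'a) \<Rightarrow> 'a measure measure set" where
  "QF M T = {P. prob_space P \<and> sets P = sets (prob_algebra M) \<and>
     distr P (prob_algebra M) (push M T) = P \<and>
     (\<forall>A\<in>sets M. (\<integral>\<^sup>+\<nu>. emeasure \<nu> A \<partial>P) = emeasure M A)}"

abbreviation Zpow :: "'a measure \<Rightarrow> (int \<Rightarrow> 'a) measure" where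
  "Zpow M \<equiv> PiM (UNIV :: int set) (\<lambda>_. M)"

definition Tinf :: "('a \<Rightarrow> 'a) \<Rightarrow> (int \<Rightarrow> 'a) \<Rightarrow> (int \<Rightarrow> 'a)" where
  "Tinf T x = (\<lambda>n. T (x n))"

definition Pbar_inf :: "'a measure \<Rightarrow> 'a measure measure \<Rightarrow> (int \<Rightarrow> 'a) measure" where
  "Pbar_inf M P = measure_of (space (Zpow M)) (sets (Zpow M))
     (\<lambda>A. \<integral>\<^sup>+\<theta>. emeasure (PiM (UNIV :: int set) (\<lambda>_. \<theta>)) A \<partial>P)"

definition finite_perm :: "(int \<Rightarrow> int) \<Rightarrow> bool" where
  "finite_perm \<pi> \<longleftrightarrow> bij \<pi> \<and> finite {n. \<pi> n \<noteq> n}"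

definition symmetric_sets :: "'a measure \<Rightarrow> (int \<Rightarrow> 'a) set set" where
  "symmetric_sets M = {A \<in> sets (Zpow M).
     \<forall>\<pi>. finite_perm \<pi> \<longrightarrow> (\<lambda>x. x \<circ> \<pi>) -` A \<inter> space (Zpow M) = A}"

end

theory Submission
  imports Defs
begin

text \<open>
  Write \<open>iid \<theta>\<close> for the product measure \<open>\<theta>\<^sup>\<otimes>\<^sup>\<int>\<close>, so that \<open>Pbar_inf M P\<close> is the mixture
  \<open>P \<bind> iid\<close>.  The isomorphism is given by the empirical measure \<open>emp x\<close> of a
  sequence \<open>x \<in> X\<^sup>\<int>\<close>: transport \<open>X\<close> into \<open>(0,1)\<close> by a Borel code \<open>e\<close> (the space is
  standard), let \<open>emp x\<close> be the law whose distribution function at a rational \<open>q\<close> is the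
  upper asymptotic frequency of \<open>e (x k) \<le> q\<close> along \<open>k = 0, 1, 2, \<dots>\<close>, and pull it back.
  The proof rests on three facts:
  (1) it is invariant under finite permutations, hence measurable for the symmetric sets;
  (2) by Hoeffding and Borel--Cantelli, \<open>emp x = \<theta>\<close> for \<open>iid \<theta>\<close>-almost every \<open>x\<close>;
  (3) (Hewitt--Savage) every symmetric set has \<open>iid \<theta>\<close>-measure \<open>0\<close> or \<open>1\<close>.
  From (2), \<open>emp\<close> pushes \<open>Pbar_inf M P\<close> to \<open>P\<close> and intertwines \<open>T\<^sup>\<infinity>\<close> with
  \<open>T\<^sub>*\<close>; with (3) also every symmetric set \<open>A\<close> agrees almost surely with
  \<open>emp\<^sup>-\<^sup>1 {\<theta>. iid \<theta> A = 1}\<close>.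
\<close>

section \<open>I.i.d. powers and the mixture \<open>Pbar_inf\<close>\<close>

abbreviation iid :: "'a measure \<Rightarrow> (int \<Rightarrow> 'a) measure" where
  "iid \<theta> \<equiv> PiM (UNIV :: int set) (\<lambda>_. \<theta>)"

lemma sets_iid: "sets \<theta> = sets M \<Longrightarrow> sets (iid \<theta>) = sets (Zpow M)"
  by (rule sets_PiM_cong) auto

lemma space_iid: "sets \<theta> = sets M \<Longrightarrow> space (iid \<theta>) = space (Zpow M)"
  by (rule sets_eq_imp_space_eq, rule sets_iid)

lemma prob_space_iid: "prob_space \<theta> \<Longrightarrow> prob_space (iid \<theta>)"
  by (intro prob_space_PiM)

lemma space_prob_algebraD:
  "\<theta> \<in> space (prob_algebra M) \<Longrightarrow> prob_space \<theta> \<and> sets \<theta> = sets M"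
  by (auto simp: space_prob_algebra)

lemma measurable_emeasure_prob_algebra[measurable]:
  assumes "A \<in> sets M" shows "(\<lambda>x. emeasure x A) \<in> borel_measurable (prob_algebra M)"
  by (rule measurable_compose[OF measurable_prob_algebraD[OF measurable_ident_sets[OF refl]]
        measurable_emeasure_subprob_algebra[OF assms]])

text \<open>\<open>\<theta> \<mapsto> \<theta>\<^sup>\<otimes>\<^sup>\<int>\<close> is measurable; it suffices to test on cylinders, where the measure of
  a cylinder is a finite product of values of \<open>\<theta>\<close>.\<close>
lemma measurable_iid: "iid \<in> prob_algebra M \<rightarrow>\<^sub>M prob_algebra (Zpow M)"
proof (rule measurable_prob_algebra_generated[OF sets_PiM Int_stable_prod_algebra prod_algebra_sets_into_space])
  fix a assume a: "a \<in> space (prob_algebra M)"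
  then show "prob_space (iid a)" by (auto simp: space_prob_algebra intro: prob_space_iid)
  show "sets (iid a) = sets (Zpow M)" using a sets_iid[of a M] by (simp add: space_prob_algebra)
next
  fix A assume "A \<in> prod_algebra UNIV (\<lambda>_::int. M)"
  then obtain J E where A: "A = prod_emb UNIV (\<lambda>_. M) J (\<Pi>\<^sub>E j\<in>J. E j)" "finite J"
     "\<And>i. i \<in> J \<Longrightarrow> E i \<in> sets M" by (rule prod_algebraE) auto
  have "(\<lambda>a. \<Prod>j\<in>J. emeasure a (E j)) \<in> borel_measurable (prob_algebra M)"
    using A(3) by (intro borel_measurable_prod_ennreal measurable_emeasure_prob_algebra) auto
  then show "(\<lambda>a. emeasure (iid a) A) \<in> borel_measurable (prob_algebra M)"
  proof (rule measurable_cong[THEN iffD1, rotated])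
    fix a assume a: "a \<in> space (prob_algebra M)"
    then have s: "sets a = sets M" "prob_space a"
      by (auto simp: space_prob_algebra)
    have "space a = space M" "sets a = sets M" "prob_space a"
      using s sets_eq_imp_space_eq[OF s(1)] by auto
    then have "A = prod_emb UNIV (\<lambda>_. a) J (\<Pi>\<^sub>E j\<in>J. E j)" using A by (simp add: prod_emb_def)
    then show "(\<Prod>j\<in>J. emeasure a (E j)) = emeasure (iid a) A"
      using A \<open>sets a = sets M\<close> \<open>prob_space a\<close> by (simp add: emeasure_PiM_emb)
  qed
qed

lemma Pbar_inf_eq_bind:
  assumes P: "prob_space P" "sets P = sets (prob_algebra M)"
  shows "Pbar_inf M P = P \<bind> iid"
proof -
  have sp: "space P = space (prob_algebra M)" using P(2) by (rule sets_eq_imp_space_eq)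
  have ne: "space P \<noteq> {}" using P(1) prob_space.not_empty by blast
  have iidP: "iid \<in> P \<rightarrow>\<^sub>M prob_algebra (Zpow M)"
    using measurable_iid measurable_cong_sets[OF P(2) refl] by blast
  have sb: "sets (P \<bind> iid) = sets (Zpow M)"
  proof (rule sets_bind[OF _ ne])
    fix x assume "x \<in> space P"
    then have "sets x = sets M" using sp by (simp add: space_prob_algebra)
    then show "sets (iid x) = sets (Zpow M)" by (rule sets_iid)
  qed
  have "P \<bind> iid = measure_of (space (P \<bind> iid)) (sets (P \<bind> iid)) (emeasure (P \<bind> iid))"
    by (simp add: measure_of_of_measure)
  also have "\<dots> = measure_of (space (Zpow M)) (sets (Zpow M)) (emeasure (P \<bind> iid))"
    using sb sets_eq_imp_space_eq[OF sb] by simp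
  also have "\<dots> = Pbar_inf M P"
    unfolding Pbar_inf_def
  proof (rule measure_of_eq)
    show "sets (Zpow M) \<subseteq> Pow (space (Zpow M))" by (rule sets.space_closed)
    fix a assume "a \<in> sigma_sets (space (Zpow M)) (sets (Zpow M))"
    then have a: "a \<in> sets (Zpow M)" by (simp add: sets.sigma_sets_eq)
    show "emeasure (P \<bind> iid) a = (\<integral>\<^sup>+ \<theta>. emeasure (iid \<theta>) a \<partial>P)"
      using P(1) sp a iidP by (intro emeasure_bind_prob_algebra) (auto simp: space_prob_algebra)
  qed
  finally show ?thesis ..
qed

lemma sets_Pbar_inf: "sets (Pbar_inf M P) = sets (Zpow M)"
  unfolding Pbar_inf_def by (simp add: sets.sigma_sets_eq sets.space_closed)

lemma space_Pbar_inf: "space (Pbar_inf M P) = space (Zpow M)"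
  by (rule sets_eq_imp_space_eq[OF sets_Pbar_inf])

lemma AE_Pbar_inf:
  assumes P: "prob_space P" "sets P = sets (prob_algebra M)"
    and Q: "Measurable.pred (Zpow M) Q"
    and AE_iid: "\<And>\<theta>. \<theta> \<in> space (prob_algebra M) \<Longrightarrow> AE x in iid \<theta>. Q x"
  shows "AE x in Pbar_inf M P. Q x"
proof -
  have sp: "space P = space (prob_algebra M)" using P(2) by (rule sets_eq_imp_space_eq)
  have "iid \<in> P \<rightarrow>\<^sub>M subprob_algebra (Zpow M)"
    using measurable_prob_algebraD[OF measurable_iid] measurable_cong_sets[OF P(2) refl] by blast
  then have "(AE x in P \<bind> iid. Q x) \<longleftrightarrow> (AE \<theta> in P. AE x in iid \<theta>. Q x)"
    using Q by (rule AE_bind)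
  moreover have "AE \<theta> in P. AE x in iid \<theta>. Q x"
  proof (rule AE_I2)
    fix \<theta> assume "\<theta> \<in> space P"
    then show "AE x in iid \<theta>. Q x" using AE_iid sp by simp
  qed
  ultimately show ?thesis unfolding Pbar_inf_eq_bind[OF P] by blast
qed

lemma indep_vars_iid_coordinates:
  assumes "prob_space \<theta>"
  shows "prob_space.indep_vars (iid \<theta>) (\<lambda>_. \<theta>) (\<lambda>i x. x i) UNIV"
proof -
  interpret P: prob_space "iid \<theta>" by (intro prob_space_PiM assms)
  have "distr (iid \<theta>) \<theta> (\<lambda>x. x i) = \<theta>" for i
    using assms by (intro distr_PiM_component) auto
  then have "distr (iid \<theta>) (iid \<theta>) (\<lambda>x. \<lambda>i\<in>UNIV. x i) = PiM UNIV (\<lambda>i. distr (iid \<theta>) \<theta> (\<lambda>x. x i))"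
    by (simp add: restrict_UNIV)
  then show ?thesis
    by (subst P.indep_vars_iff_distr_eq_PiM') auto
qed

lemma measurable_comp_perm:
  "(\<lambda>x. x \<circ> (\<pi>::int\<Rightarrow>int)) \<in> iid \<theta> \<rightarrow>\<^sub>M iid \<theta>"
proof -
  have "(\<lambda>x i. x (\<pi> i)) \<in> iid \<theta> \<rightarrow>\<^sub>M iid \<theta>"
  proof (rule measurable_PiM_single')
    fix i show "(\<lambda>x. x (\<pi> i)) \<in> iid \<theta> \<rightarrow>\<^sub>M \<theta>"
      by (rule measurable_component_singleton) simp
    show "(\<lambda>x i. x (\<pi> i)) \<in> space (iid \<theta>) \<rightarrow> (\<Pi>\<^sub>E i\<in>UNIV. space \<theta>)"
      by (auto simp: space_PiM)
  qed
  then show ?thesis by (simp add: comp_def)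
qed

lemma measure_iid_perm:
  assumes th: "prob_space \<theta>" and \<pi>: "bij (\<pi>::int\<Rightarrow>int)" and S: "S \<in> sets (iid \<theta>)"
  shows "measure (iid \<theta>) ((\<lambda>x. x \<circ> \<pi>) -` S \<inter> space (iid \<theta>)) = measure (iid \<theta>) S"
proof -
  have "distr (iid \<theta>) (\<Pi>\<^sub>M i\<in>UNIV. \<theta>) (\<lambda>\<omega>. \<lambda>n\<in>UNIV. \<omega> (\<pi> n)) = (\<Pi>\<^sub>M i\<in>UNIV. \<theta>)"
    using \<pi> th by (intro distr_PiM_reindex) (auto simp: bij_def)
  then have d: "distr (iid \<theta>) (iid \<theta>) (\<lambda>x. x \<circ> \<pi>) = iid \<theta>"
    by (simp add: restrict_UNIV comp_def)
  have "measure (iid \<theta>) S = measure (distr (iid \<theta>) (iid \<theta>) (\<lambda>x. x \<circ> \<pi>)) S" by (simp add: d)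
  also have "\<dots> = measure (iid \<theta>) ((\<lambda>x. x \<circ> \<pi>) -` S \<inter> space (iid \<theta>))"
    by (rule measure_distr[OF measurable_comp_perm S])
  finally show ?thesis ..
qed

lemma measure_iid_cylinder_perm:
  assumes th: "prob_space \<theta>" and disj: "J \<inter> \<pi> ` J = {}"
    and X: "X \<in> sets (PiM J (\<lambda>_. \<theta>))"
  defines "C \<equiv> prod_emb UNIV (\<lambda>_. \<theta>) J X"
  shows "measure (iid \<theta>) (C \<inter> ((\<lambda>x. x \<circ> (\<pi>::int\<Rightarrow>int)) -` C \<inter> space (iid \<theta>)))
    = measure (iid \<theta>) C * measure (iid \<theta>) ((\<lambda>x. x \<circ> \<pi>) -` C \<inter> space (iid \<theta>))"
proof -
  let ?K = "iid \<theta>"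
  interpret P: prob_space ?K by (intro prob_space_PiM th)
  define Kf where "Kf b = (if b then J else \<pi> ` J)" for b :: bool
  have dj: "disjoint_family_on Kf UNIV"
    using disj unfolding disjoint_family_on_def Kf_def by auto
  have ind: "P.indep_vars (\<lambda>b. PiM (Kf b) (\<lambda>_. \<theta>)) (\<lambda>b \<omega>. restrict (\<lambda>i. \<omega> i) (Kf b)) UNIV"
    by (rule P.indep_vars_restrict[OF indep_vars_iid_coordinates[OF th] _ dj]) auto
  define g where "g y = (\<lambda>j\<in>J. y (\<pi> j))" for y :: "int \<Rightarrow> 'a"
  have gm: "g \<in> PiM (\<pi> ` J) (\<lambda>_. \<theta>) \<rightarrow>\<^sub>M PiM J (\<lambda>_. \<theta>)"
    unfolding g_def by (rule measurable_restrict) (rule measurable_component_singleton, auto)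
  define Y where "Y b = (if b then X else g -` X \<inter> space (PiM (\<pi> ` J) (\<lambda>_. \<theta>)))" for b
  have Y: "Y b \<in> sets (PiM (Kf b) (\<lambda>_. \<theta>))" for b
    using X measurable_sets[OF gm X] by (cases b) (auto simp: Y_def Kf_def)
  have eq: "P.prob (\<Inter>b\<in>UNIV. (\<lambda>\<omega>. restrict (\<lambda>i. \<omega> i) (Kf b)) -` Y b \<inter> space ?K)
     = (\<Prod>b\<in>UNIV. P.prob ((\<lambda>\<omega>. restrict (\<lambda>i. \<omega> i) (Kf b)) -` Y b \<inter> space ?K))"
    by (rule P.indep_varsD_finite[OF ind]) (auto simp: Y)
  have s1: "(\<lambda>\<omega>. restrict (\<lambda>i. \<omega> i) (Kf True)) -` Y True \<inter> space ?K = C"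
    by (simp add: C_def Kf_def Y_def prod_emb_def space_PiM)
  have s2: "(\<lambda>\<omega>. restrict (\<lambda>i. \<omega> i) (Kf False)) -` Y False \<inter> space ?K = (\<lambda>x. x \<circ> \<pi>) -` C \<inter> space ?K"
  proof -
    have key: "g (restrict x (\<pi> ` J)) = restrict (x \<circ> \<pi>) J" for x
      unfolding g_def by (auto simp: fun_eq_iff)
    have sp: "x \<in> space ?K \<Longrightarrow> restrict x (\<pi> ` J) \<in> space (PiM (\<pi> ` J) (\<lambda>_. \<theta>))" for x
      by (auto simp: space_PiM)
    have sp2: "x \<in> space ?K \<Longrightarrow> x \<circ> \<pi> \<in> (\<Pi>\<^sub>E i\<in>UNIV. space \<theta>)" for x
      by (auto simp: space_PiM)
    show ?thesis
      using sp sp2 by (auto simp: C_def Kf_def Y_def prod_emb_def key)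
  qed
  have "(\<Inter>b\<in>UNIV. (\<lambda>\<omega>. restrict (\<lambda>i. \<omega> i) (Kf b)) -` Y b \<inter> space ?K)
      = ((\<lambda>\<omega>. restrict (\<lambda>i. \<omega> i) (Kf True)) -` Y True \<inter> space ?K) \<inter>
        ((\<lambda>\<omega>. restrict (\<lambda>i. \<omega> i) (Kf False)) -` Y False \<inter> space ?K)"
    by (auto simp: UNIV_bool)
  then show ?thesis using eq s1 s2 by (simp add: UNIV_bool)
qed

lemma measurable_Tinf:
  assumes [measurable]: "T \<in> M \<rightarrow>\<^sub>M M" shows "Tinf T \<in> Zpow M \<rightarrow>\<^sub>M Zpow M"
  unfolding Tinf_def
proof (rule measurable_PiM_single')
  fix i :: int
  have "(\<lambda>x. x i) \<in> Zpow M \<rightarrow>\<^sub>M M" by (rule measurable_component_singleton) simp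
  then show "(\<lambda>x. T (x i)) \<in> Zpow M \<rightarrow>\<^sub>M M" by (rule measurable_compose) (rule assms)
  show "(\<lambda>x i. T (x i)) \<in> space (Zpow M) \<rightarrow> (\<Pi>\<^sub>E i\<in>UNIV. space M)"
    using measurable_space[OF assms] by (auto simp: space_PiM)
qed

text \<open>The diagonal action carries \<open>iid \<theta>\<close> to \<open>iid (T\<^sub>* \<theta>)\<close>; both sides agree on cylinders.\<close>
lemma distr_iid_Tinf:
  assumes T: "T \<in> M \<rightarrow>\<^sub>M M" and \<theta>: "\<theta> \<in> space (prob_algebra M)"
  shows "distr (iid \<theta>) (Zpow M) (Tinf T) = iid (push M T \<theta>)"
proof -
  have th: "prob_space \<theta>" "sets \<theta> = sets M" using \<theta> by (auto simp: space_prob_algebra)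
  have spth: "space \<theta> = space M" using th(2) by (rule sets_eq_imp_space_eq)
  have Tth: "T \<in> \<theta> \<rightarrow>\<^sub>M M" by (subst measurable_cong_sets[OF th(2) refl]) (rule T)
  have pth: "prob_space (push M T \<theta>)" "sets (push M T \<theta>) = sets M"
    unfolding push_def using prob_space.prob_space_distr[OF th(1) Tth] by auto
  have sK: "sets (iid \<theta>) = sets (Zpow M)" by (rule sets_iid[OF th(2)])
  have TK: "Tinf T \<in> iid \<theta> \<rightarrow>\<^sub>M Zpow M"
    by (subst measurable_cong_sets[OF sK refl]) (rule measurable_Tinf[OF T])
  show ?thesis
  proof (rule measure_eqI_PiM_infinite[where I=UNIV and M="\<lambda>_. M"])
    show "sets (distr (iid \<theta>) (Zpow M) (Tinf T)) = sets (Zpow M)" by simp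
    show "sets (iid (push M T \<theta>)) = sets (Zpow M)" by (rule sets_iid[OF pth(2)])
    show "finite_measure (distr (iid \<theta>) (Zpow M) (Tinf T))"
      using prob_space.prob_space_distr[OF prob_space_iid[OF th(1)] TK] by (simp add: prob_space_def)
  next
    fix A J assume J: "finite J" "J \<subseteq> (UNIV::int set)" and A: "\<And>i. i \<in> J \<Longrightarrow> A i \<in> sets M"
    have "emeasure (distr (iid \<theta>) (Zpow M) (Tinf T)) (prod_emb UNIV (\<lambda>_. M) J (Pi\<^sub>E J A))
      = emeasure (iid \<theta>) (Tinf T -` prod_emb UNIV (\<lambda>_. M) J (Pi\<^sub>E J A) \<inter> space (iid \<theta>))"
      using J A by (intro emeasure_distr TK sets_PiM_I) auto
    also have "Tinf T -` prod_emb UNIV (\<lambda>_. M) J (Pi\<^sub>E J A) \<inter> space (iid \<theta>)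
       = prod_emb UNIV (\<lambda>_. \<theta>) J (Pi\<^sub>E J (\<lambda>j. T -` A j \<inter> space \<theta>))"
      using measurable_space[OF T] A[THEN sets.sets_into_space]
      by (auto simp: prod_emb_def space_PiM PiE_iff Tinf_def spth)
    also have "emeasure (iid \<theta>) \<dots> = (\<Prod>j\<in>J. emeasure \<theta> (T -` A j \<inter> space \<theta>))"
      using J A th by (intro emeasure_PiM_emb) (auto intro!: measurable_sets[OF Tth])
    also have "\<dots> = (\<Prod>j\<in>J. emeasure (push M T \<theta>) (A j))"
      unfolding push_def using A by (intro prod.cong refl emeasure_distr[symmetric] Tth) auto
    also have "\<dots> = emeasure (iid (push M T \<theta>)) (prod_emb UNIV (\<lambda>_. push M T \<theta>) J (Pi\<^sub>E J A))"
      using J A pth by (intro emeasure_PiM_emb[symmetric]) auto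
    also have "prod_emb UNIV (\<lambda>_. push M T \<theta>) J (Pi\<^sub>E J A) = prod_emb UNIV (\<lambda>_. M) J (Pi\<^sub>E J A)"
      using sets_eq_imp_space_eq[OF pth(2)] by (simp add: prod_emb_def)
    finally show "emeasure (distr (iid \<theta>) (Zpow M) (Tinf T)) (prod_emb UNIV (\<lambda>_. M) J (Pi\<^sub>E J A)) =
      emeasure (iid (push M T \<theta>)) (prod_emb UNIV (\<lambda>_. M) J (Pi\<^sub>E J A))" .
  qed
qed

lemma hoeffding_iid_average:
  assumes th: "prob_space \<theta>" and g: "g \<in> borel_measurable \<theta>"
    and g01: "\<And>a. a \<in> space \<theta> \<Longrightarrow> 0 \<le> g a \<and> g a \<le> 1" and \<epsilon>: "\<epsilon> \<ge> 0"
  shows "measure (iid \<theta>) {x\<in>space (iid \<theta>).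
      \<epsilon> \<le> \<bar>(\<Sum>k<Suc n. g (x (int k))) / real (Suc n) - integral\<^sup>L \<theta> g\<bar>}
    \<le> 2 * exp (- 2 * real (Suc n) * \<epsilon>\<^sup>2)"
proof -
  interpret P: prob_space "iid \<theta>" by (rule prob_space_iid[OF th])
  define Y where "Y = (\<lambda>(j::int) (x::int \<Rightarrow> 'a). g (x j))"
  define I where "I = int ` {..<Suc n}"
  have cI: "card I = Suc n" unfolding I_def by (simp add: card_image)
  have comp: "(\<lambda>x. x j) \<in> iid \<theta> \<rightarrow>\<^sub>M \<theta>" for j :: int by (rule measurable_component_singleton) auto
  have coord: "distr (iid \<theta>) \<theta> (\<lambda>x. x j) = \<theta>" for j :: int
    by (rule distr_PiM_component) (auto intro: th)
  have dY: "distr (iid \<theta>) borel (Y j) = distr \<theta> borel g" for j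
    unfolding Y_def using distr_distr[OF g comp] by (simp add: comp_def coord)
  have "integral\<^sup>L (distr (iid \<theta>) \<theta> (\<lambda>x. x 0)) g = P.expectation (\<lambda>x. g (x 0))"
    by (rule integral_distr[OF comp g])
  then have EY: "P.expectation (Y 0) = integral\<^sup>L \<theta> g" by (simp add: Y_def coord)
  interpret Hf: Hoeffding_ineq_iid "iid \<theta>" I Y "Y 0" 0 1 "integral\<^sup>L \<theta> g"
  proof unfold_locales
    show "finite I" by (simp add: I_def)
    show "P.indep_vars (\<lambda>_. borel) Y I"
      unfolding Y_def
      by (rule P.indep_vars_subset[OF P.indep_vars_compose2[OF indep_vars_iid_coordinates[OF th] g]]) auto
    show "distr (iid \<theta>) borel (Y i) = distr (iid \<theta>) borel (Y 0)" for i by (simp add: dY)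
    show "Y 0 \<in> borel_measurable (iid \<theta>)" unfolding Y_def by (rule measurable_compose[OF comp g])
    show "AE x in iid \<theta>. Y 0 x \<in> {0..1}"
      using g01 by (intro AE_I2) (auto simp: Y_def space_PiM)
    show "integral\<^sup>L \<theta> g \<equiv> P.expectation (Y 0)" using EY by simp
  qed
  have sums: "(\<Sum>i\<in>I. Y i x) = (\<Sum>k<Suc n. g (x (int k)))" for x
    unfolding I_def Y_def by (subst sum.reindex) auto
  have "P.prob {x\<in>space (iid \<theta>). \<bar>(\<Sum>i\<in>I. Y i x) / real (card I) - integral\<^sup>L \<theta> g\<bar> \<ge> \<epsilon>}
      \<le> 2 * exp (- 2 * real (card I) * \<epsilon>\<^sup>2 / (1 - 0)\<^sup>2)"
    using \<epsilon> by (intro Hf.Hoeffding_ineq_abs_ge') (auto simp: I_def)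
  then show ?thesis unfolding sums cI by simp
qed

section \<open>The Hewitt--Savage zero--one law\<close>

definition approximable :: "'a measure \<Rightarrow> 'a set set \<Rightarrow> 'a set \<Rightarrow> bool" where
  "approximable M G A \<longleftrightarrow> (\<forall>\<epsilon>>0. \<exists>C\<in>G. measure M (sym_diff A C) < \<epsilon>)"

lemma measure_symdiff:
  assumes "finite_measure M" "S \<in> sets M" "T \<in> sets M"
  shows "\<bar>measure M S - measure M T\<bar> \<le> measure M (sym_diff S T)"
proof -
  interpret finite_measure M by fact
  have D: "sym_diff S T \<in> sets M" using assms by auto
  have "measure M S \<le> measure M (T \<union> (sym_diff S T))"
    using assms D by (intro finite_measure_mono) auto
  also have "\<dots> \<le> measure M T + measure M (sym_diff S T)"
    using assms D by (intro measure_Un_le) auto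
  finally have 1: "measure M S \<le> measure M T + measure M (sym_diff S T)" .
  have "measure M T \<le> measure M (S \<union> (sym_diff S T))"
    using assms D by (intro finite_measure_mono) auto
  also have "\<dots> \<le> measure M S + measure M (sym_diff S T)"
    using assms D by (intro measure_Un_le) auto
  finally have 2: "measure M T \<le> measure M S + measure M (sym_diff S T)" .
  show ?thesis using 1 2 by linarith
qed

lemma measure_symdiff_Int_le:
  assumes "finite_measure M" "A \<in> sets M" "C \<in> sets M" "D \<in> sets M"
  shows "measure M (sym_diff A (C \<inter> D))
    \<le> measure M (sym_diff A C) + measure M (sym_diff A D)"
proof -
  interpret finite_measure M by fact
  have "measure M (sym_diff A (C \<inter> D)) \<le> measure M ((sym_diff A C) \<union> (sym_diff A D))"
    using assms by (intro finite_measure_mono) auto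
  also have "\<dots> \<le> measure M (sym_diff A C) + measure M (sym_diff A D)"
    using assms by (intro measure_Un_le) auto
  finally show ?thesis .
qed

lemma approximable_Compl:
  assumes "finite_measure M" "algebra (space M) G" "G \<subseteq> sets M"
    and a: "a \<in> sets M" and approx: "approximable M G a"
  shows "approximable M G (space M - a)"
  unfolding approximable_def
proof (intro allI impI)
  interpret finite_measure M by fact
  interpret G: algebra "space M" G by fact
  fix \<epsilon> :: real assume "\<epsilon> > 0"
  then obtain C where C: "C \<in> G" "measure M (sym_diff a C) < \<epsilon>"
    using approx by (auto simp: approximable_def)
  have "C \<in> sets M" using C assms(3) by auto
  moreover have "sym_diff (space M - a) (space M - C) \<subseteq> sym_diff a C"
    by auto
  ultimately have "measure M (sym_diff (space M - a) (space M - C)) \<le> measure M (sym_diff a C)"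
    using a by (intro finite_measure_mono) auto
  then show "\<exists>C'\<in>G. measure M (sym_diff (space M - a) C') < \<epsilon>"
    using C by (intro bexI[of _ "space M - C"]) auto
qed

lemma measure_UN_tail_small:
  fixes a :: "nat \<Rightarrow> 'a set"
  assumes "finite_measure M" and aM: "\<And>i. a i \<in> sets M" and \<epsilon>: "\<epsilon> > 0"
  shows "\<exists>N. measure M ((\<Union>i. a i) - (\<Union>i<N. a i)) < \<epsilon>"
proof -
  interpret finite_measure M by fact
  define V where "V N = (\<Union>i<N. a i)" for N
  have VM: "V N \<in> sets M" for N unfolding V_def using aM by (intro sets.finite_UN) auto
  have UM: "(\<Union>i. a i) \<in> sets M" using aM by (intro sets.countable_UN) auto
  have "(\<lambda>N. measure M (V N)) \<longlonglongrightarrow> measure M (\<Union>N. V N)"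
  proof (rule finite_Lim_measure_incseq)
    show "range V \<subseteq> sets M" using VM by auto
    show "incseq V" unfolding incseq_def V_def by (force intro: UN_mono)
  qed
  moreover have "(\<Union>N. V N) = (\<Union>i. a i)" unfolding V_def by auto
  ultimately have "(\<lambda>N. measure M (V N)) \<longlonglongrightarrow> measure M (\<Union>i. a i)" by simp
  then obtain N where N: "\<bar>measure M (V N) - measure M (\<Union>i. a i)\<bar> < \<epsilon>"
    using \<epsilon> unfolding LIMSEQ_def dist_real_def by (metis le_refl)
  have "V N \<subseteq> (\<Union>i. a i)" unfolding V_def by auto
  then have "measure M ((\<Union>i. a i) - V N) < \<epsilon>"
    using N by (simp add: finite_measure_Diff[OF UM VM] abs_if split: if_splits)
  then show ?thesis unfolding V_def by blast
qed

lemma approximable_UN: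
  fixes a :: "nat \<Rightarrow> 'a set"
  assumes fm: "finite_measure M" and alg: "algebra (space M) G" and GM: "G \<subseteq> sets M"
    and aM: "\<And>i. a i \<in> sets M" and approx: "\<And>i. approximable M G (a i)"
  shows "approximable M G (\<Union>i. a i)"
  unfolding approximable_def
proof (intro allI impI)
  interpret finite_measure M by fact
  interpret G: algebra "space M" G by fact
  fix \<epsilon> :: real assume \<epsilon>: "\<epsilon> > 0"
  define U where "U = (\<Union>i. a i)"
  have UM: "U \<in> sets M" unfolding U_def using aM by (intro sets.countable_UN) auto
  obtain N where N: "measure M (U - (\<Union>i<N. a i)) < \<epsilon> / 2"
    using measure_UN_tail_small[where a=a, OF fm aM half_gt_zero[OF \<epsilon>]] unfolding U_def by blast
  define \<delta> where "\<delta> = \<epsilon> / (2 * real (Suc N))"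
  have "\<delta> > 0" using \<epsilon> by (simp add: \<delta>_def)
  then have "\<forall>i. \<exists>C\<in>G. measure M (sym_diff (a i) C) < \<delta>"
    using approx unfolding approximable_def by blast
  then obtain c where c: "\<And>i. c i \<in> G" "\<And>i. measure M (sym_diff (a i) (c i)) < \<delta>"
    by metis
  have cM: "c i \<in> sets M" for i using c GM by auto
  define C where "C = (\<Union>i<N. c i)"
  have CG: "C \<in> G" unfolding C_def using c by auto
  have "sym_diff U C \<subseteq> (U - (\<Union>i<N. a i)) \<union> (\<Union>i<N. sym_diff (a i) (c i))"
    unfolding U_def C_def by auto
  then have "measure M (sym_diff U C)
      \<le> measure M ((U - (\<Union>i<N. a i)) \<union> (\<Union>i<N. sym_diff (a i) (c i)))"
    using UM aM cM by (intro finite_measure_mono) auto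
  also have "\<dots> \<le> measure M (U - (\<Union>i<N. a i)) + measure M (\<Union>i<N. sym_diff (a i) (c i))"
    using UM aM cM by (intro measure_Un_le) auto
  also have "measure M (\<Union>i<N. sym_diff (a i) (c i)) \<le> (\<Sum>i<N. measure M (sym_diff (a i) (c i)))"
    using aM cM by (intro measure_UNION_le) auto
  also have "\<dots> \<le> (\<Sum>i<N. \<delta>)" using c(2) by (intro sum_mono) (simp add: less_imp_le)
  also have "(\<Sum>i<N. \<delta>) \<le> \<epsilon> / 2"
    using \<epsilon> by (simp add: \<delta>_def field_simps)
  finally have "measure M (sym_diff U C) < \<epsilon>" using N by simp
  then show "\<exists>C\<in>G. measure M (sym_diff (\<Union>i. a i) C) < \<epsilon>"
    using CG unfolding U_def by blast
qed

lemma approximable_sigma_sets: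
  assumes fm: "finite_measure M" and alg: "algebra (space M) G"
    and sg: "sets M = sigma_sets (space M) G" and A: "A \<in> sets M"
  shows "approximable M G A"
proof -
  have GM: "G \<subseteq> sets M" using sg by auto
  have "A \<in> sigma_sets (space M) G" using A sg by simp
  then show ?thesis
  proof (induction A rule: sigma_sets.induct)
    case (Basic a)
    then show ?case by (auto simp: approximable_def intro!: bexI[of _ a])
  next
    case Empty
    interpret G: algebra "space M" G by fact
    show ?case by (auto simp: approximable_def intro!: bexI[of _ "{}"])
  next
    case (Compl a)
    then show ?case using approximable_Compl[OF fm alg GM] sg by simp
  next
    case (Union a)
    then show ?case using approximable_UN[OF fm alg GM] sg by simp
  qed
qed

lemma finite_perm_separating:
  fixes J :: "int set" assumes J: "finite J"
  obtains \<pi> where "finite_perm \<pi>" "J \<inter> \<pi> ` J = {}"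
proof -
  define N where "N = (\<Sum>j\<in>J. nat \<bar>j\<bar>)"
  have JN: "\<bar>j\<bar> \<le> int N" if "j \<in> J" for j
  proof -
    have "nat \<bar>j\<bar> \<le> N" unfolding N_def using J that by (intro member_le_sum) auto
    then show ?thesis by linarith
  qed
  define s where "s = 2 * int N + 1"
  define \<pi> where "\<pi> k = (if \<bar>k\<bar> \<le> int N then k + s else if int N < k \<and> k \<le> 3 * int N + 1 then k - s else k)" for k
  have inv: "\<pi> (\<pi> k) = k" for k unfolding \<pi>_def s_def by auto
  have "bij \<pi>"
    by (rule bij_betwI[where g=\<pi>]) (auto simp: inv)
  moreover have "finite {k. \<pi> k \<noteq> k}"
    by (rule finite_subset[of _ "{- int N .. 3 * int N + 1}"]) (auto simp: \<pi>_def s_def split: if_splits)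
  ultimately have "finite_perm \<pi>" by (simp add: finite_perm_def)
  moreover have "J \<inter> \<pi> ` J = {}"
  proof safe
    fix j j' assume j': "j' \<in> J" and eq: "\<pi> j' \<in> J"
    have "\<pi> j' = j' + s" using JN[OF j'] by (simp add: \<pi>_def)
    then have "\<pi> j' > int N" using JN[OF j'] by (simp add: s_def)
    then show "\<pi> j' \<in> {}" using JN[OF eq] by simp
  qed
  ultimately show thesis by (rule that)
qed

text \<open>Key estimate: approximate a symmetric \<open>A\<close> by a cylinder \<open>C\<close>, and \<open>C\<close> by an independent
  permuted copy; then \<open>\<mu> A \<approx> \<mu> (C \<inter> C') = (\<mu> C)\<^sup>2 \<approx> (\<mu> A)\<^sup>2\<close>.\<close>
lemma hewitt_savage_estimate:
  assumes th: "prob_space \<theta>" and A: "A \<in> sets (iid \<theta>)"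
    and sym: "\<And>\<pi>. finite_perm \<pi> \<Longrightarrow> (\<lambda>x. x \<circ> \<pi>) -` A \<inter> space (iid \<theta>) = A"
    and \<epsilon>: "\<epsilon> > 0"
  shows "\<bar>measure (iid \<theta>) A - measure (iid \<theta>) A * measure (iid \<theta>) A\<bar> \<le> 4 * \<epsilon>"
proof -
  let ?K = "iid \<theta>"
  interpret P: prob_space ?K by (intro prob_space_PiM th)
  interpret PP: product_prob_space "\<lambda>_::int. \<theta>" UNIV
    by (simp add: product_prob_space_def product_prob_space_axioms_def product_sigma_finite_def
        th prob_space_imp_sigma_finite)
  have fm: "finite_measure ?K" by (rule P.finite_measure_axioms)
  define a where "a = measure ?K A"
  obtain C where C: "C \<in> PP.generator" and AC: "measure ?K (sym_diff A C) < \<epsilon>"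
    using approximable_sigma_sets[OF fm PP.algebra_generator PP.sets_PiM_generator A] \<epsilon>
    unfolding approximable_def by blast
  from C obtain J X where J: "finite J" and X: "X \<in> sets (PiM J (\<lambda>_. \<theta>))"
    and Ceq: "C = prod_emb UNIV (\<lambda>_. \<theta>) J X"
    by (cases rule: PP.generator.cases) auto
  have CM: "C \<in> sets ?K" unfolding Ceq using X by (intro measurable_prod_emb) auto
  obtain \<pi> where fp: "finite_perm \<pi>" and disj: "J \<inter> \<pi> ` J = {}"
    using finite_perm_separating[OF J] by blast
  have bij: "bij \<pi>" using fp by (simp add: finite_perm_def)
  define C' where "C' = (\<lambda>x. x \<circ> \<pi>) -` C \<inter> space ?K"
  have C'M: "C' \<in> sets ?K" unfolding C'_def using measurable_sets[OF measurable_comp_perm CM] .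
  define c where "c = measure ?K C"
  have mC': "measure ?K C' = c" unfolding C'_def c_def by (rule measure_iid_perm[OF th bij CM])
  have mCC: "measure ?K (C \<inter> C') = c * c"
    using measure_iid_cylinder_perm[OF th disj X] mC' unfolding C'_def c_def Ceq by simp
  text \<open>By symmetry of \<open>A\<close>, the permuted copy \<open>C'\<close> approximates \<open>A\<close> as well as \<open>C\<close> does.\<close>
  have "sym_diff A C' = (\<lambda>x. x \<circ> \<pi>) -` (sym_diff A C) \<inter> space ?K"
    using sym[OF fp] unfolding C'_def by blast
  then have AC': "measure ?K (sym_diff A C') < \<epsilon>"
    using measure_iid_perm[OF th bij, of "sym_diff A C"] A CM AC by simp
  have d1: "\<bar>a - c\<bar> < \<epsilon>"
    using measure_symdiff[OF fm A CM] AC unfolding a_def c_def by simp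
  have "\<bar>a - c * c\<bar> < 2 * \<epsilon>"
    using measure_symdiff[OF fm A, of "C \<inter> C'"] measure_symdiff_Int_le[OF fm A CM C'M]
      CM C'M AC AC' mCC unfolding a_def by auto
  moreover have "\<bar>c * c - a * a\<bar> \<le> 2 * \<epsilon>"
  proof -
    have "0 \<le> a" "a \<le> 1" "0 \<le> c" "c \<le> 1" by (simp_all add: a_def c_def)
    then have "\<bar>c + a\<bar> \<le> 2" by simp
    have "\<bar>c * c - a * a\<bar> = \<bar>c - a\<bar> * \<bar>c + a\<bar>" by (simp add: abs_mult[symmetric] algebra_simps)
    also have "\<dots> \<le> \<epsilon> * 2"
      using d1 \<open>\<bar>c + a\<bar> \<le> 2\<close> by (intro mult_mono) auto
    finally show ?thesis by simp
  qed
  ultimately show ?thesis unfolding a_def by linarith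
qed

lemma hewitt_savage:
  assumes th: "prob_space \<theta>" and A: "A \<in> sets (iid \<theta>)"
    and sym: "\<And>\<pi>. finite_perm \<pi> \<Longrightarrow> (\<lambda>x. x \<circ> \<pi>) -` A \<inter> space (iid \<theta>) = A"
  shows "measure (iid \<theta>) A = 0 \<or> measure (iid \<theta>) A = 1"
proof -
  define a where "a = measure (iid \<theta>) A"
  have "\<bar>a - a * a\<bar> \<le> 0"
  proof (rule field_le_epsilon)
    fix \<epsilon> :: real assume "0 < \<epsilon>"
    then show "\<bar>a - a * a\<bar> \<le> 0 + \<epsilon>"
      using hewitt_savage_estimate[OF th A sym, of "\<epsilon> / 4"] unfolding a_def by simp
  qed
  then have "a * (1 - a) = 0" by (simp add: algebra_simps)
  then show ?thesis unfolding a_def by auto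
qed

lemma space_Zpow: "space (Zpow M) = {x. \<forall>i. x i \<in> space M}"
  by (auto simp: space_PiM PiE_def extensional_def Pi_def)

lemma Zpow_comp: "x \<in> space (Zpow M) \<Longrightarrow> x \<circ> \<pi> \<in> space (Zpow M)"
  by (auto simp: space_Zpow)

lemma measurable_symmetric_sets:
  assumes f: "f \<in> Zpow M \<rightarrow>\<^sub>M N"
    and inv: "\<And>x \<pi>. x \<in> space (Zpow M) \<Longrightarrow> finite_perm \<pi> \<Longrightarrow> f (x \<circ> \<pi>) = f x"
  shows "f \<in> sigma (space (Zpow M)) (symmetric_sets M) \<rightarrow>\<^sub>M N"
proof -
  have sub: "symmetric_sets M \<subseteq> Pow (space (Zpow M))"
    unfolding symmetric_sets_def using sets.sets_into_space by auto
  have sp: "space (sigma (space (Zpow M)) (symmetric_sets M)) = space (Zpow M)"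
    using sub by (simp add: space_measure_of)
  show ?thesis
  proof (rule measurableI)
    fix x assume "x \<in> space (sigma (space (Zpow M)) (symmetric_sets M))"
    then show "f x \<in> space N" using sp measurable_space[OF f] by auto
  next
    fix A assume A: "A \<in> sets N"
    have "f -` A \<inter> space (Zpow M) \<in> symmetric_sets M"
      unfolding symmetric_sets_def
    proof (intro CollectI conjI allI impI)
      show "f -` A \<inter> space (Zpow M) \<in> sets (Zpow M)" using measurable_sets[OF f A] .
      fix \<pi> :: "int \<Rightarrow> int" assume \<pi>: "finite_perm \<pi>"
      show "(\<lambda>x. x \<circ> \<pi>) -` (f -` A \<inter> space (Zpow M)) \<inter> space (Zpow M) = f -` A \<inter> space (Zpow M)"
        using inv[OF _ \<pi>] Zpow_comp[of _ M \<pi>] by auto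
    qed
    then show "f -` A \<inter> space (sigma (space (Zpow M)) (symmetric_sets M))
        \<in> sets (sigma (space (Zpow M)) (symmetric_sets M))"
      using sp sub by (auto simp: sets_measure_of)
  qed
qed

section \<open>Coding a standard space into the unit interval\<close>

lemma logit_logistic: "ln ((1 / (1 + exp (- y))) / (1 - 1 / (1 + exp (- y)))) = (y::real)"
proof -
  have "0 < 1 + exp (- y)" by (simp add: add_pos_pos)
  then have "(1 / (1 + exp (- y))) / (1 - 1 / (1 + exp (- y))) = 1 / exp (- y)"
    by (simp add: field_simps)
  also have "\<dots> = exp y" by (simp add: exp_minus divide_inverse)
  finally show ?thesis by simp
qed

text \<open>A standard probability space embeds measurably into \<open>(0,1)\<close> with a measurable
  left inverse (compose the Borel isomorphism with the logistic function).\<close>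
lemma standard_unit_code:
  assumes "standard_prob_space M"
  obtains e :: "'a \<Rightarrow> real" and r :: "real \<Rightarrow> 'a"
  where "e \<in> M \<rightarrow>\<^sub>M borel" "r \<in> borel \<rightarrow>\<^sub>M M" "\<And>a. a \<in> space M \<Longrightarrow> r (e a) = a"
    "\<And>a. 0 < e a" "\<And>a. e a < 1"
proof -
  from assms have pM: "prob_space M" and sb: "standard_borel M" by (auto simp: standard_prob_space_def)
  from sb obtain B f g where B: "B \<in> sets (borel :: real measure)"
    and f: "f \<in> M \<rightarrow>\<^sub>M restrict_space borel B" and g: "g \<in> restrict_space borel B \<rightarrow>\<^sub>M M"
    and gf: "\<And>x. x\<in>space M \<Longrightarrow> g (f x) = x"
    unfolding standard_borel_def by blast
  obtain a0 where a0: "a0 \<in> space M" using prob_space.not_empty[OF pM] by blast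
  have fm[measurable]: "f \<in> borel_measurable M" and fB: "f \<in> space M \<rightarrow> B"
    using f by (auto simp: measurable_restrict_space2_iff)
  define e where "e a = 1 / (1 + exp (- f a))" for a
  define h where "h y = ln (y / (1 - y))" for y :: real
  define S where "S = {y::real. 0 < y \<and> y < 1 \<and> h y \<in> B}"
  define r where "r y = (if y \<in> S then g (h y) else a0)" for y
  have hm[measurable]: "h \<in> borel_measurable borel" unfolding h_def by measurable
  have Bm[measurable]: "B \<in> sets borel" by fact
  have Sm: "S \<in> sets borel" unfolding S_def by measurable
  have em: "e \<in> M \<rightarrow>\<^sub>M borel" unfolding e_def by measurable
  have epos: "0 < e a" for a unfolding e_def by (simp add: add_pos_pos)
  have elt: "e a < 1" for a unfolding e_def by (simp add: add_pos_pos)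
  have he: "h (e a) = f a" for a
    unfolding h_def e_def by (rule logit_logistic)
  have re: "r (e a) = a" if "a \<in> space M" for a
    using that fB epos[of a] elt[of a] gf[OF that] by (auto simp: r_def S_def he)
  have rm: "r \<in> borel \<rightarrow>\<^sub>M M"
    unfolding r_def
  proof (subst measurable_If_restrict_space_iff)
    show "{x \<in> space borel. x \<in> S} \<in> sets borel" using Sm by simp
    have "h \<in> restrict_space borel {x. x \<in> S} \<rightarrow>\<^sub>M restrict_space borel B"
    proof (rule measurable_restrict_space3)
      show "h \<in> borel \<rightarrow>\<^sub>M borel" by (rule hm)
      show "h \<in> {x. x \<in> S} \<rightarrow> B" by (auto simp: S_def)
    qed
    then have "(\<lambda>y. g (h y)) \<in> restrict_space borel {x. x \<in> S} \<rightarrow>\<^sub>M M"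
      using g by (rule measurable_compose)
    then show "(\<lambda>y. g (h y)) \<in> restrict_space borel {x. x \<in> S} \<rightarrow>\<^sub>M M \<and>
       (\<lambda>x. a0) \<in> restrict_space borel {x. x \<notin> S} \<rightarrow>\<^sub>M M"
      using a0 by simp
  qed
  show thesis by (rule that[OF em rm re epos elt])
qed

lemma Rats_dense_right: "\<exists>q\<in>\<rat>. t < q \<and> q < t + d" if "d > 0" for t d :: real
  using Rats_dense_in_real[of t "t + d"] that by auto

lemma sets_borel_atMost: "sets (borel :: real measure) = sigma_sets UNIV (range atMost)"
  by (subst borel_eq_atMost) (simp add: sets_measure_of)

lemma INF_rat_right_continuous:
  fixes C :: "real \<Rightarrow> real"
  assumes mono: "\<And>x y. x \<le> y \<Longrightarrow> C x \<le> C y" and rc: "\<And>a. continuous (at_right a) C"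
  shows "(INF q\<in>{q\<in>\<rat>. t < q}. ereal (C q)) = ereal (C t)"
proof (rule antisym)
  show "ereal (C t) \<le> (INF q\<in>{q\<in>\<rat>. t < q}. ereal (C q))"
    by (intro INF_greatest) (auto intro: mono)
  have "(INF q\<in>{q\<in>\<rat>. t < q}. ereal (C q)) \<le> ereal (C t + \<epsilon>)" if \<epsilon>: "\<epsilon> > 0" for \<epsilon>
  proof -
    have "\<forall>\<epsilon>>0. \<exists>\<delta>>0. C (t + \<delta>) - C t < \<epsilon>"
      using continuous_at_right_real_increasing[of C t, OF mono] rc[of t] by simp
    then obtain \<delta> where \<delta>: "\<delta> > 0" "C (t + \<delta>) - C t < \<epsilon>" using \<epsilon> by blast
    obtain q where q: "q \<in> \<rat>" "t < q" "q < t + \<delta>" using Rats_dense_in_real[of t "t + \<delta>"] \<delta> by auto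
    have "(INF q\<in>{q\<in>\<rat>. t < q}. ereal (C q)) \<le> ereal (C q)" using q by (intro INF_lower) auto
    also have "C q \<le> C (t + \<delta>)" using q by (intro mono) simp
    then have "ereal (C q) \<le> ereal (C t + \<epsilon>)" using \<delta> by simp
    finally show ?thesis .
  qed
  note eps = this
  show "(INF q\<in>{q\<in>\<rat>. t < q}. ereal (C q)) \<le> ereal (C t)"
  proof (rule ereal_le_epsilon2)
    fix \<epsilon> :: real assume "0 < \<epsilon>"
    then have "(INF q\<in>{q\<in>\<rat>. t < q}. ereal (C q)) \<le> ereal (C t + \<epsilon>)" by (rule eps)
    then show "(INF q\<in>{q\<in>\<rat>. t < q}. ereal (C q)) \<le> ereal (C t) + ereal \<epsilon>" by simp
  qed
qed

lemma LIMSEQ_inverse_Suc_criterion: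
  fixes f :: "nat \<Rightarrow> real"
  assumes "\<forall>m. eventually (\<lambda>n. \<bar>f n - p\<bar> < 1 / real (Suc m)) sequentially"
  shows "f \<longlonglongrightarrow> p"
proof (rule tendstoI)
  fix d :: real assume "d > 0"
  then obtain m where "inverse (real (Suc m)) < d" using reals_Archimedean by blast
  then have "1 / real (Suc m) < d" by (simp add: inverse_eq_divide)
  with assms[rule_format, of m] show "eventually (\<lambda>n. dist (f n) p < d) sequentially"
    by (auto simp: dist_real_def elim!: eventually_mono)
qed

section \<open>The empirical measure of a sequence\<close>

text \<open>All constructions below only look
  at the coordinates \<open>x 0, x 1, \<dots>\<close>.\<close>
locale unit_code =
  fixes M :: "'a measure" and e :: "'a \<Rightarrow> real" and r :: "real \<Rightarrow> 'a"
  assumes pM: "prob_space M" and em[measurable]: "e \<in> M \<rightarrow>\<^sub>M borel"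
    and rm[measurable]: "r \<in> borel \<rightarrow>\<^sub>M M"
    and re: "\<And>a. a \<in> space M \<Longrightarrow> r (e a) = a" and epos: "\<And>a. 0 < e a" and elt: "\<And>a. e a < 1"
begin

definition freq :: "real \<Rightarrow> nat \<Rightarrow> (int \<Rightarrow> 'a) \<Rightarrow> real" where
  "freq q n x = (\<Sum>k<Suc n. if e (x (int k)) \<le> q then 1 else 0) / real (Suc n)"

text \<open>Its upper limit; it exists for every \<open>x\<close>, and is a genuine limit almost surely.\<close>
definition upper_freq :: "(int \<Rightarrow> 'a) \<Rightarrow> real \<Rightarrow> ereal" where
  "upper_freq x q = limsup (\<lambda>n. ereal (freq q n x))"

text \<open>Right-continuous regularisation through rational points, giving a distribution
  function \<open>ecdf x\<close> on \<open>\<real>\<close>.\<close>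
definition ecdf_ext :: "(int \<Rightarrow> 'a) \<Rightarrow> real \<Rightarrow> ereal" where
  "ecdf_ext x t = (INF q\<in>{q\<in>\<rat>. t < q}. upper_freq x q)"

definition ecdf :: "(int \<Rightarrow> 'a) \<Rightarrow> real \<Rightarrow> real" where
  "ecdf x t = real_of_ereal (ecdf_ext x t)"

definition ecdf_law :: "(int \<Rightarrow> 'a) \<Rightarrow> real measure" where
  "ecdf_law x = interval_measure (ecdf x)"

definition emp :: "(int \<Rightarrow> 'a) \<Rightarrow> 'a measure" where
  "emp x = distr (ecdf_law x) M r"

lemma code_law: "sets \<theta> = sets M \<Longrightarrow> e \<in> \<theta> \<rightarrow>\<^sub>M borel"
  using measurable_cong_sets[of \<theta> M borel borel] em by simp

lemma decode_code_law:
  assumes th: "sets \<theta> = sets M"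
  shows "distr (distr \<theta> borel e) M r = \<theta>"
proof -
  have "distr (distr \<theta> borel e) M r = distr \<theta> M (\<lambda>a. r (e a))"
    by (subst distr_distr[OF rm code_law[OF th]]) (simp add: comp_def)
  also have "\<dots> = distr \<theta> M (\<lambda>a. a)"
    by (rule distr_cong) (auto simp: re sets_eq_imp_space_eq[OF th])
  also have "\<dots> = \<theta>" by (rule distr_id2[OF th[symmetric]])
  finally show ?thesis .
qed

lemma cdf_code_law:
  assumes th: "sets \<theta> = sets M"
  shows "cdf (distr \<theta> borel e) q = measure \<theta> {a\<in>space M. e a \<le> q}"
  unfolding cdf_def using code_law[OF th]
  by (subst measure_distr) (auto simp: sets_eq_imp_space_eq[OF th] intro!: arg_cong[where f="measure \<theta>"])

lemma freq_nonneg: "0 \<le> freq q n x"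
  unfolding freq_def by (intro divide_nonneg_nonneg sum_nonneg) auto

lemma freq_le1: "freq q n x \<le> 1"
proof -
  have "(\<Sum>k<Suc n. if e (x (int k)) \<le> q then 1 else 0) \<le> (\<Sum>k<Suc n. (1::real))"
    by (intro sum_mono) auto
  then show ?thesis unfolding freq_def by (simp add: divide_le_eq_1)
qed

lemma freq_ge1: "1 \<le> q \<Longrightarrow> freq q n x = 1"
proof -
  assume q: "1 \<le> q"
  have "\<And>k. e (x (int k)) \<le> q" using elt q by (metis less_le_not_le order.trans nle_le)
  then show ?thesis unfolding freq_def by simp
qed

lemma freq_le0: "q \<le> 0 \<Longrightarrow> freq q n x = 0"
proof -
  assume q: "q \<le> 0"
  have "\<And>k. \<not> e (x (int k)) \<le> q" using epos q by (metis not_le order.strict_trans2)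
  then show ?thesis unfolding freq_def by simp
qed

lemma upper_freq_nonneg: "0 \<le> upper_freq x q"
  unfolding upper_freq_def by (intro le_Limsup) (auto simp: freq_nonneg)

lemma upper_freq_le1: "upper_freq x q \<le> 1"
  unfolding upper_freq_def by (intro Limsup_bounded) (auto simp: freq_le1)

lemma upper_freq_ge1: "1 \<le> q \<Longrightarrow> upper_freq x q = 1"
  unfolding upper_freq_def by (simp add: freq_ge1 Limsup_const)

lemma upper_freq_le0: "q \<le> 0 \<Longrightarrow> upper_freq x q = 0"
  unfolding upper_freq_def by (simp add: freq_le0 Limsup_const zero_ereal_def)

lemma ecdf_ext_nonneg: "0 \<le> ecdf_ext x t"
  unfolding ecdf_ext_def by (intro INF_greatest upper_freq_nonneg)

lemma ecdf_ext_le1: "ecdf_ext x t \<le> 1"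
proof -
  obtain q where q: "q \<in> \<rat>" "t < q" using Rats_dense_right[of 1 t] by auto
  then have "ecdf_ext x t \<le> upper_freq x q" unfolding ecdf_ext_def by (intro INF_lower) auto
  then show ?thesis using upper_freq_le1 order.trans by blast
qed

lemma ecdf_ext_mono: "t \<le> t' \<Longrightarrow> ecdf_ext x t \<le> ecdf_ext x t'"
  unfolding ecdf_ext_def by (intro INF_superset_mono) auto

lemma ecdf_ext_le_upper_freq: "t < q \<Longrightarrow> q \<in> \<rat> \<Longrightarrow> ecdf_ext x t \<le> upper_freq x q"
  unfolding ecdf_ext_def by (intro INF_lower) auto

lemma ecdf_ext_ge1: "1 \<le> t \<Longrightarrow> ecdf_ext x t = 1"
  unfolding ecdf_ext_def
proof -
  assume t: "1 \<le> t"
  obtain q where q: "q \<in> \<rat>" "t < q" using Rats_dense_right[of 1 t] by auto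
  have "(INF q\<in>{q \<in> \<rat>. t < q}. upper_freq x q) = (INF q\<in>{q \<in> \<rat>. t < q}. 1)"
    using t by (intro INF_cong) (auto simp: upper_freq_ge1)
  also have "\<dots> = 1"
  proof -
    have "{q \<in> \<rat>. t < q} \<noteq> {}" using q by auto
    then show ?thesis by simp
  qed
  finally show "(INF q\<in>{q \<in> \<rat>. t < q}. upper_freq x q) = 1" .
qed

lemma ecdf_ext_neg: "t < 0 \<Longrightarrow> ecdf_ext x t = 0"
proof -
  assume t: "t < 0"
  obtain q where q: "q \<in> \<rat>" "t < q" "q < t + (- t)" using Rats_dense_right[of "-t" t] t by auto
  then have "ecdf_ext x t \<le> upper_freq x q" by (intro ecdf_ext_le_upper_freq) auto
  also have "upper_freq x q = 0" using q by (intro upper_freq_le0) auto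
  finally show ?thesis using ecdf_ext_nonneg[of x t] by simp
qed

lemma ecdf_ext_real: "ecdf_ext x t = ereal (ecdf x t)"
  unfolding ecdf_def using ecdf_ext_nonneg[of x t] ecdf_ext_le1[of x t]
  by (cases "ecdf_ext x t") auto

lemma ecdf_mono: "t \<le> t' \<Longrightarrow> ecdf x t \<le> ecdf x t'" using ecdf_ext_mono[of t t' x] by (simp add: ecdf_ext_real)

lemma ecdf_right_cont: "continuous (at_right a) (ecdf x)"
proof -
  have mono: "\<And>t t'. t \<le> t' \<Longrightarrow> ecdf x t \<le> ecdf x t'" by (rule ecdf_mono)
  have "\<forall>\<epsilon>>0. \<exists>\<delta>>0. ecdf x (a + \<delta>) - ecdf x a < \<epsilon>"
  proof (intro allI impI)
  fix \<epsilon> :: real assume \<epsilon>: "\<epsilon> > 0"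
  have "ecdf_ext x a < ereal (ecdf x a + \<epsilon>)" using \<epsilon> by (simp add: ecdf_ext_real)
  then obtain q where q: "q \<in> \<rat>" "a < q" "upper_freq x q < ereal (ecdf x a + \<epsilon>)"
    unfolding ecdf_ext_def INF_less_iff by auto
  define \<delta> where "\<delta> = (q - a) / 2"
  have \<delta>: "\<delta> > 0" "a + \<delta> < q" using q by (auto simp: \<delta>_def field_simps)
  have "ereal (ecdf x (a + \<delta>)) \<le> upper_freq x q" using ecdf_ext_le_upper_freq[OF \<delta>(2) q(1)] by (simp add: ecdf_ext_real)
  then have "ereal (ecdf x (a + \<delta>)) < ereal (ecdf x a + \<epsilon>)" using q(3) by (rule le_less_trans)
  then have "ecdf x (a + \<delta>) < ecdf x a + \<epsilon>" by simp
  then show "\<exists>\<delta>>0. ecdf x (a + \<delta>) - ecdf x a < \<epsilon>" using \<delta> by (intro exI[of _ \<delta>]) auto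
  qed
  then show ?thesis using continuous_at_right_real_increasing[of "ecdf x" a, OF mono] by simp
qed

lemma ecdf_at_bot: "(ecdf x \<longlongrightarrow> 0) at_bot"
proof (rule tendsto_eventually)
  show "\<forall>\<^sub>F t in at_bot. ecdf x t = 0"
    unfolding eventually_at_bot_linorder
    by (intro exI[of _ "-1"]) (auto simp: ecdf_def ecdf_ext_neg)
qed

lemma ecdf_at_top: "(ecdf x \<longlongrightarrow> 1) at_top"
proof (rule tendsto_eventually)
  show "\<forall>\<^sub>F t in at_top. ecdf x t = 1"
    unfolding eventually_at_top_linorder
    by (intro exI[of _ "1"]) (auto simp: ecdf_def ecdf_ext_ge1)
qed

lemma ecdf_law_real_distribution: "real_distribution (ecdf_law x)"
  unfolding ecdf_law_def by (intro real_distribution_interval_measure ecdf_mono ecdf_right_cont ecdf_at_bot ecdf_at_top)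

lemma ecdf_law_Iic: "emeasure (ecdf_law x) {..t} = ecdf x t"
  unfolding ecdf_law_def by (intro emeasure_interval_measure_Iic ecdf_mono ecdf_right_cont ecdf_at_bot)

lemma measurable_freq[measurable]: "(\<lambda>x. freq q n x) \<in> borel_measurable (Zpow M)"
  unfolding freq_def by measurable

lemma measurable_upper_freq[measurable]: "(\<lambda>x. upper_freq x q) \<in> borel_measurable (Zpow M)"
  unfolding upper_freq_def by measurable

lemma measurable_ecdf_ext[measurable]: "(\<lambda>x. ecdf_ext x t) \<in> borel_measurable (Zpow M)"
  unfolding ecdf_ext_def
  by (rule borel_measurable_INF) (auto intro: countable_subset[OF _ countable_rat])

lemma measurable_ecdf[measurable]: "(\<lambda>x. ecdf x t) \<in> borel_measurable (Zpow M)"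
  unfolding ecdf_def by measurable

lemma measurable_ecdf_law: "ecdf_law \<in> Zpow M \<rightarrow>\<^sub>M prob_algebra borel"
proof (rule measurable_prob_algebra_generated[OF sets_borel_atMost])
  show "Int_stable (range (atMost :: real \<Rightarrow> _))"
    by (auto simp: Int_stable_def intro!: image_eqI[where x="min _ _"])
  show "range atMost \<subseteq> Pow (UNIV::real set)" by auto
  fix x show "prob_space (ecdf_law x)" using ecdf_law_real_distribution[of x] by (simp add: real_distribution_def)
  show "sets (ecdf_law x) = sets borel" by (simp add: ecdf_law_def)
next
  fix A :: "real set" assume "A \<in> range atMost"
  then obtain t where A: "A = {..t}" by auto
  show "(\<lambda>a. emeasure (ecdf_law a) A) \<in> borel_measurable (Zpow M)"
    unfolding A ecdf_law_Iic by measurable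
qed

lemma measurable_emp: "emp \<in> Zpow M \<rightarrow>\<^sub>M prob_algebra M"
  unfolding emp_def
  by (rule measurable_compose[OF measurable_ecdf_law measurable_distr_prob_space[OF rm]])

lemma freq_perm_diff:
  assumes fin: "finite {m. \<pi> m \<noteq> m}"
  shows "\<bar>freq q n (x \<circ> \<pi>) - freq q n x\<bar> \<le> real (card {m. \<pi> m \<noteq> m}) / real (Suc n)"
proof -
  define S where "S = {m. \<pi> m \<noteq> m}"
  define a where "a k = (if e (x (\<pi> (int k))) \<le> q then 1 else 0 :: real)" for k :: nat
  define b where "b k = (if e (x (int k)) \<le> q then 1 else 0 :: real)" for k :: nat
  have "\<bar>(\<Sum>k<Suc n. a k) - (\<Sum>k<Suc n. b k)\<bar> = \<bar>\<Sum>k<Suc n. a k - b k\<bar>"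
    by (simp add: sum_subtractf)
  also have "\<dots> \<le> (\<Sum>k<Suc n. \<bar>a k - b k\<bar>)" by (rule sum_abs)
  also have "\<dots> = (\<Sum>k\<in>{k\<in>{..<Suc n}. int k \<in> S}. \<bar>a k - b k\<bar>)"
    by (rule sum.mono_neutral_right) (auto simp: a_def b_def S_def)
  also have "\<dots> \<le> (\<Sum>k\<in>{k\<in>{..<Suc n}. int k \<in> S}. 1)"
    by (intro sum_mono) (auto simp: a_def b_def)
  also have "\<dots> = real (card {k\<in>{..<Suc n}. int k \<in> S})" by simp
  also have "card {k\<in>{..<Suc n}. int k \<in> S} \<le> card S"
  proof -
    have "{k\<in>{..<Suc n}. int k \<in> S} \<subseteq> nat ` S" by (auto intro: image_eqI[where x="int _"])
    then have "card {k\<in>{..<Suc n}. int k \<in> S} \<le> card (nat ` S)"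
      using fin by (intro card_mono) (auto simp: S_def)
    also have "\<dots> \<le> card S" using fin by (intro card_image_le) (auto simp: S_def)
    finally show ?thesis .
  qed
  finally have *: "\<bar>(\<Sum>k<Suc n. a k) - (\<Sum>k<Suc n. b k)\<bar> \<le> real (card S)" by simp
  have "freq q n (x \<circ> \<pi>) - freq q n x = ((\<Sum>k<Suc n. a k) - (\<Sum>k<Suc n. b k)) / real (Suc n)"
    unfolding freq_def a_def b_def by (simp add: diff_divide_distrib)
  then show ?thesis using * unfolding S_def[symmetric]
    by (simp add: abs_divide divide_right_mono)
qed

lemma upper_freq_perm:
  assumes fin: "finite {m. \<pi> m \<noteq> m}"
  shows "upper_freq (x \<circ> \<pi>) q = upper_freq x q"
proof -
  define c where "c = real (card {m. \<pi> m \<noteq> m})"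
  define u where "u n = ereal (freq q n (x \<circ> \<pi>) - freq q n x)" for n
  have "(\<lambda>n. freq q n (x \<circ> \<pi>) - freq q n x) \<longlonglongrightarrow> 0"
  proof (rule Lim_null_comparison)
    show "\<forall>\<^sub>F n in sequentially. norm (freq q n (x \<circ> \<pi>) - freq q n x) \<le> c / real (Suc n)"
      using freq_perm_diff[OF fin] by (auto simp: c_def)
    show "(\<lambda>n. c / real (Suc n)) \<longlonglongrightarrow> 0"
    proof -
      have "(\<lambda>n. c * inverse (real (Suc n))) \<longlonglongrightarrow> 0"
        by (intro tendsto_mult_right_zero LIMSEQ_inverse_real_of_nat)
      then show ?thesis by (simp add: divide_inverse)
    qed
  qed
  then have u: "u \<longlonglongrightarrow> 0" unfolding u_def by (simp add: zero_ereal_def tendsto_ereal)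
  have "upper_freq (x \<circ> \<pi>) q = limsup (\<lambda>n. u n + ereal (freq q n x))"
    unfolding upper_freq_def u_def by simp
  also have "\<dots> = 0 + limsup (\<lambda>n. ereal (freq q n x))"
    by (rule ereal_limsup_lim_add[OF u]) simp
  finally show ?thesis unfolding upper_freq_def by simp
qed

lemma emp_perm:
  assumes fin: "finite {m. \<pi> m \<noteq> m}"
  shows "emp (x \<circ> \<pi>) = emp x"
  unfolding emp_def ecdf_law_def ecdf_def ecdf_ext_def upper_freq_perm[OF fin] ..

lemma measurable_emp_symmetric: "emp \<in> sigma (space (Zpow M)) (symmetric_sets M) \<rightarrow>\<^sub>M prob_algebra M"
  by (rule measurable_symmetric_sets[OF measurable_emp]) (auto simp: finite_perm_def emp_perm)

lemma freq_tail:
  assumes \<theta>: "\<theta> \<in> space (prob_algebra M)" and \<epsilon>: "\<epsilon> \<ge> 0"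
  shows "measure (iid \<theta>) {x\<in>space (iid \<theta>). \<epsilon> \<le> \<bar>freq q n x - measure \<theta> {a\<in>space M. e a \<le> q}\<bar>}
         \<le> 2 * exp (- 2 * real (Suc n) * \<epsilon>\<^sup>2)"
proof -
  have th: "prob_space \<theta>" "sets \<theta> = sets M" using space_prob_algebraD[OF \<theta>] by auto
  have spth: "space \<theta> = space M" using th(2) by (rule sets_eq_imp_space_eq)
  define g where "g a = (if e a \<le> q then 1 else 0 :: real)" for a
  have gm: "g \<in> borel_measurable \<theta>"
    unfolding g_def by (subst measurable_cong_sets[OF th(2) refl]) measurable
  have "integral\<^sup>L \<theta> g = integral\<^sup>L \<theta> (indicator {a\<in>space M. e a \<le> q})"
    by (intro Bochner_Integration.integral_cong) (auto simp: g_def indicator_def spth)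
  also have "\<dots> = measure \<theta> {a\<in>space M. e a \<le> q}"
    by (simp add: spth Int_absorb2)
  finally have "integral\<^sup>L \<theta> g = measure \<theta> {a\<in>space M. e a \<le> q}" .
  moreover have "freq q n x = (\<Sum>k<Suc n. g (x (int k))) / real (Suc n)" for x
    unfolding freq_def g_def ..
  moreover have "\<And>a. a \<in> space \<theta> \<Longrightarrow> 0 \<le> g a \<and> g a \<le> 1" by (simp add: g_def)
  ultimately show ?thesis
    using hoeffding_iid_average[OF th(1) gm _ \<epsilon>, of n] by simp
qed

text \<open>The tail bounds are summable, so by Borel--Cantelli the frequencies are eventually
  \<open>\<epsilon>\<close>-close to \<open>\<theta> {e \<le> q}\<close>, almost surely.\<close>
lemma freq_eventually_close:
  assumes \<theta>: "\<theta> \<in> space (prob_algebra M)" and \<epsilon>: "\<epsilon> > 0"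
  shows "AE x in iid \<theta>. eventually (\<lambda>n. \<bar>freq q n x - measure \<theta> {a\<in>space M. e a \<le> q}\<bar> < \<epsilon>) sequentially"
proof -
  define p where "p = measure \<theta> {a\<in>space M. e a \<le> q}"
  have th: "prob_space \<theta>" "sets \<theta> = sets M" using space_prob_algebraD[OF \<theta>] by auto
  interpret P: prob_space "iid \<theta>" by (rule prob_space_iid[OF th(1)])
  have fm: "(\<lambda>x. freq q n x) \<in> borel_measurable (iid \<theta>)" for n
    by (subst measurable_cong_sets[OF sets_iid[OF th(2)] refl]) (rule measurable_freq)
  define A where "A n = {x\<in>space (iid \<theta>). \<epsilon> \<le> \<bar>freq q n x - p\<bar>}" for n
  have Am: "A n \<in> sets (iid \<theta>)" for n unfolding A_def using fm[of n] by measurable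
  define c where "c = exp (- 2 * \<epsilon>\<^sup>2)"
  have bound: "measure (iid \<theta>) (A n) \<le> 2 * c * c ^ n" for n
  proof -
    have "exp (- 2 * real (Suc n) * \<epsilon>\<^sup>2) = exp (real (Suc n) * (- 2 * \<epsilon>\<^sup>2))"
      by (simp only: mult_ac mult_minus_left mult_minus_right)
    also have "\<dots> = c ^ Suc n" unfolding c_def by (rule exp_of_nat_mult)
    finally show ?thesis
      using freq_tail[OF \<theta>, of \<epsilon> q n] \<epsilon> unfolding A_def p_def by (simp add: mult_ac)
  qed
  have "summable (\<lambda>n. 2 * c * c ^ n)"
    using \<epsilon> unfolding c_def by (intro summable_mult summable_geometric) auto
  moreover have "\<exists>N. \<forall>n\<ge>N. norm (measure (iid \<theta>) (A n)) \<le> 2 * c * c ^ n"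
    using bound by simp
  ultimately have sumA: "summable (\<lambda>n. measure (iid \<theta>) (A n))"
    by (rule summable_comparison_test[rotated])
  have "AE x in iid \<theta>. eventually (\<lambda>n. x \<in> space (iid \<theta>) - A n) sequentially"
    by (rule borel_cantelli_AE1[OF Am _ sumA]) (simp add: P.emeasure_eq_measure)
  then show ?thesis unfolding p_def[symmetric]
    by (rule AE_mp) (auto simp: A_def elim!: eventually_mono intro!: AE_I2)
qed

lemma freq_lim:
  assumes \<theta>: "\<theta> \<in> space (prob_algebra M)"
  shows "AE x in iid \<theta>. (\<lambda>n. freq q n x) \<longlonglongrightarrow> measure \<theta> {a\<in>space M. e a \<le> q}"
proof -
  have "AE x in iid \<theta>. \<forall>m. eventually
      (\<lambda>n. \<bar>freq q n x - measure \<theta> {a\<in>space M. e a \<le> q}\<bar> < 1 / real (Suc m)) sequentially"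
    using freq_eventually_close[OF \<theta>] by (simp add: AE_all_countable)
  then show ?thesis by (rule AE_mp) (auto intro!: AE_I2 LIMSEQ_inverse_Suc_criterion)
qed

text \<open>Through its code law, a probability measure on \<open>X\<close> is determined by its values on
  the countably many sets \<open>{e \<le> q}\<close>, \<open>q \<in> \<rat>\<close>.\<close>
lemma measure_eq_rat:
  assumes \<mu>: "\<mu> \<in> space (prob_algebra M)" and \<nu>: "\<nu> \<in> space (prob_algebra M)"
    and eq: "\<forall>q\<in>\<rat>. emeasure \<mu> {a\<in>space M. e a \<le> q} = emeasure \<nu> {a\<in>space M. e a \<le> q}"
  shows "\<mu> = \<nu>"
proof -
  have mu: "prob_space \<mu>" "sets \<mu> = sets M" and nu: "prob_space \<nu>" "sets \<nu> = sets M"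
    using \<mu> \<nu> by (auto simp: space_prob_algebra)
  interpret A: real_distribution "distr \<mu> borel e"
    using prob_space.real_distribution_distr[OF mu(1) code_law[OF mu(2)]] .
  interpret B: real_distribution "distr \<nu> borel e"
    using prob_space.real_distribution_distr[OF nu(1) code_law[OF nu(2)]] .
  have cq: "ereal (cdf (distr \<mu> borel e) q) = ereal (cdf (distr \<nu> borel e) q)" if "q \<in> \<rat>" for q
  proof -
    have "measure \<mu> {a\<in>space M. e a \<le> q} = measure \<nu> {a\<in>space M. e a \<le> q}"
      using eq that by (simp add: measure_def)
    then show ?thesis by (simp only: cdf_code_law[OF mu(2)] cdf_code_law[OF nu(2)])
  qed
  have "cdf (distr \<mu> borel e) = cdf (distr \<nu> borel e)"
  proof
    fix t
    have "ereal (cdf (distr \<mu> borel e) t) = (INF q\<in>{q\<in>\<rat>. t < q}. ereal (cdf (distr \<mu> borel e) q))"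
      by (rule INF_rat_right_continuous[symmetric]) (auto intro: A.cdf_nondecreasing A.cdf_is_right_cont)
    also have "\<dots> = (INF q\<in>{q\<in>\<rat>. t < q}. ereal (cdf (distr \<nu> borel e) q))"
      by (intro INF_cong) (auto simp: cq)
    also have "\<dots> = ereal (cdf (distr \<nu> borel e) t)"
      by (rule INF_rat_right_continuous) (auto intro: B.cdf_nondecreasing B.cdf_is_right_cont)
    finally show "cdf (distr \<mu> borel e) t = cdf (distr \<nu> borel e) t" by simp
  qed
  then have "distr \<mu> borel e = distr \<nu> borel e"
    by (rule cdf_unique[OF A.real_distribution_axioms B.real_distribution_axioms])
  then show ?thesis using decode_code_law[OF mu(2)] decode_code_law[OF nu(2)] by metis
qed

lemma emp_eqI:
  assumes \<theta>: "\<theta> \<in> space (prob_algebra M)"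
    and freq_eq: "\<forall>q\<in>\<rat>. upper_freq x q = ereal (cdf (distr \<theta> borel e) q)"
  shows "emp x = \<theta>"
proof -
  have th: "prob_space \<theta>" "sets \<theta> = sets M" using \<theta> by (auto simp: space_prob_algebra)
  define \<rho> where "\<rho> = distr \<theta> borel e"
  interpret rho: real_distribution \<rho> unfolding \<rho>_def
    using prob_space.real_distribution_distr[OF th(1) code_law[OF th(2)]] .
  have "ereal (ecdf x t) = ereal (cdf \<rho> t)" for t
  proof -
    have "ereal (ecdf x t) = (INF q\<in>{q\<in>\<rat>. t < q}. ereal (cdf \<rho> q))"
      using freq_eq unfolding ecdf_ext_real[symmetric] ecdf_ext_def \<rho>_def
      by (intro INF_cong) auto
    also have "\<dots> = ereal (cdf \<rho> t)"
      by (rule INF_rat_right_continuous) (auto intro: rho.cdf_nondecreasing rho.cdf_is_right_cont)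
    finally show ?thesis .
  qed
  then have ecdf_eq: "ecdf x = cdf \<rho>" by (simp add: fun_eq_iff)
  have "ecdf_law x = \<rho>"
  proof (rule cdf_unique[OF ecdf_law_real_distribution])
    show "real_distribution \<rho>" ..
    show "cdf (ecdf_law x) = cdf \<rho>" unfolding ecdf_law_def ecdf_eq
      by (rule cdf_interval_measure) (auto intro: rho.cdf_nondecreasing rho.cdf_is_right_cont rho.cdf_lim_at_bot)
  qed
  then show ?thesis using decode_code_law[OF th(2)] by (simp add: emp_def \<rho>_def)
qed

lemma emp_AE:
  assumes \<theta>: "\<theta> \<in> space (prob_algebra M)"
  shows "AE x in iid \<theta>. emp x = \<theta>"
proof -
  have th: "sets \<theta> = sets M" using space_prob_algebraD[OF \<theta>] by blast
  have "AE x in iid \<theta>. \<forall>q\<in>\<rat>. (\<lambda>n. freq q n x) \<longlonglongrightarrow> measure \<theta> {a\<in>space M. e a \<le> q}"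
    by (rule AE_ball_countable'[OF freq_lim[OF \<theta>] countable_rat])
  then show ?thesis
  proof (rule AE_mp, intro AE_I2 impI)
    fix x assume h: "\<forall>q\<in>\<rat>. (\<lambda>n. freq q n x) \<longlonglongrightarrow> measure \<theta> {a\<in>space M. e a \<le> q}"
    show "emp x = \<theta>"
    proof (rule emp_eqI[OF \<theta>], intro ballI)
      fix q :: real assume q: "q \<in> \<rat>"
      have "(\<lambda>n. ereal (freq q n x)) \<longlonglongrightarrow> ereal (cdf (distr \<theta> borel e) q)"
        using h q by (simp add: cdf_code_law[OF th])
      then show "upper_freq x q = ereal (cdf (distr \<theta> borel e) q)"
        unfolding upper_freq_def by (intro lim_imp_Limsup) simp_all
    qed
  qed
qed

lemma measurable_emp_iid:
  "\<theta> \<in> space (prob_algebra M) \<Longrightarrow> emp \<in> iid \<theta> \<rightarrow>\<^sub>M prob_algebra M"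
  using measurable_cong_sets[OF sets_iid refl] measurable_emp space_prob_algebraD by blast

text \<open>\<open>emp\<close> pushes the mixture forward to \<open>P\<close>, since it collapses each \<open>iid \<theta>\<close> to the point
  mass at \<open>\<theta>\<close>.\<close>
lemma distr_Pbar_inf_emp:
  assumes P: "prob_space P" "sets P = sets (prob_algebra M)"
  shows "distr (Pbar_inf M P) (prob_algebra M) emp = P"
proof -
  have spP: "space P = space (prob_algebra M)" using P(2) by (rule sets_eq_imp_space_eq)
  have neP: "space P \<noteq> {}" using prob_space.not_empty[OF P(1)] .
  have iidP: "iid \<in> P \<rightarrow>\<^sub>M subprob_algebra (Zpow M)"
    using measurable_prob_algebraD[OF measurable_iid] measurable_cong_sets[OF P(2) refl] by blast
  have "distr (Pbar_inf M P) (prob_algebra M) emp = P \<bind> (\<lambda>\<theta>. distr (iid \<theta>) (prob_algebra M) emp)"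
    unfolding Pbar_inf_eq_bind[OF P] by (rule distr_bind[OF iidP neP measurable_emp])
  also have "\<dots> = P \<bind> return (prob_algebra M)"
  proof (rule bind_cong[OF refl])
    fix \<theta> assume "\<theta> \<in> space P"
    then have \<theta>: "\<theta> \<in> space (prob_algebra M)" using spP by simp
    interpret K: prob_space "iid \<theta>" using prob_space_iid space_prob_algebraD[OF \<theta>] by blast
    have "distr (iid \<theta>) (prob_algebra M) emp = distr (iid \<theta>) (prob_algebra M) (\<lambda>_. \<theta>)"
      by (rule distr_cong_AE[OF refl refl emp_AE[OF \<theta>] measurable_emp_iid[OF \<theta>]]) (simp add: \<theta>)
    also have "\<dots> = return (prob_algebra M) \<theta>" by (rule K.distr_const[OF \<theta>])
    finally show "distr (iid \<theta>) (prob_algebra M) emp = return (prob_algebra M) \<theta>" .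
  qed
  also have "\<dots> = P" by (rule bind_return''[OF P(2)])
  finally show ?thesis .
qed

text \<open>Equality of two measurable families of probability measures on \<open>X\<close> is a measurable
  event: by \<open>measure_eq_rat\<close> it is a countable intersection of measurable events.\<close>
lemma pred_prob_algebra_eq:
  assumes f: "f \<in> N \<rightarrow>\<^sub>M prob_algebra M" and g: "g \<in> N \<rightarrow>\<^sub>M prob_algebra M"
  shows "Measurable.pred N (\<lambda>x. f x = g x)"
proof -
  define Aq where "Aq q = {a\<in>space M. e a \<le> q}" for q
  have AqM: "Aq q \<in> sets M" for q unfolding Aq_def by measurable
  have fq: "(\<lambda>x. emeasure (f x) (Aq q)) \<in> borel_measurable N"
    and gq: "(\<lambda>x. emeasure (g x) (Aq q)) \<in> borel_measurable N" for q
    by (rule measurable_compose[OF f measurable_emeasure_prob_algebra[OF AqM]]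
             measurable_compose[OF g measurable_emeasure_prob_algebra[OF AqM]])+
  have "{x\<in>space N. f x = g x}
      = (\<Inter>q\<in>\<rat>. {x\<in>space N. emeasure (f x) (Aq q) = emeasure (g x) (Aq q)})"
    using measurable_space[OF f] measurable_space[OF g] Rats_0
    by (auto intro!: measure_eq_rat simp: Aq_def)
  also have "\<dots> \<in> sets N"
    using borel_measurable_eq[OF fq gq] Rats_0 by (intro sets.countable_INT' countable_rat) blast+
  finally show ?thesis unfolding pred_def .
qed

text \<open>Under \<open>iid \<theta>\<close>, both \<open>emp (T\<^sup>\<infinity> x)\<close> and \<open>T\<^sub>* (emp x)\<close> are almost surely \<open>T\<^sub>* \<theta>\<close>,
  because \<open>T\<^sup>\<infinity>\<close> carries \<open>iid \<theta>\<close> to \<open>iid (T\<^sub>* \<theta>)\<close>.\<close>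
lemma emp_Tinf_iid:
  assumes Tm: "T \<in> M \<rightarrow>\<^sub>M M" and \<theta>: "\<theta> \<in> space (prob_algebra M)"
  shows "AE x in iid \<theta>. emp (Tinf T x) = push M T (emp x)"
proof -
  have th: "sets \<theta> = sets M" using space_prob_algebraD[OF \<theta>] by blast
  have p\<theta>: "push M T \<theta> \<in> space (prob_algebra M)"
    unfolding push_def using measurable_space[OF measurable_distr_prob_space[OF Tm] \<theta>] .
  have TK: "Tinf T \<in> iid \<theta> \<rightarrow>\<^sub>M Zpow M"
    by (subst measurable_cong_sets[OF sets_iid[OF th] refl]) (rule measurable_Tinf[OF Tm])
  have "AE y in distr (iid \<theta>) (Zpow M) (Tinf T). emp y = push M T \<theta>"
    unfolding distr_iid_Tinf[OF Tm \<theta>] by (rule emp_AE[OF p\<theta>])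
  then have "AE x in iid \<theta>. emp (Tinf T x) = push M T \<theta>" by (rule AE_distrD[OF TK])
  then show ?thesis using emp_AE[OF \<theta>] by eventually_elim simp
qed

lemma emp_Tinf:
  assumes P: "prob_space P" "sets P = sets (prob_algebra M)" and Tm: "T \<in> M \<rightarrow>\<^sub>M M"
  shows "AE x in Pbar_inf M P. emp (Tinf T x) = push M T (emp x)"
proof (rule AE_Pbar_inf[OF P _ emp_Tinf_iid[OF Tm]])
  have pushm: "push M T \<in> prob_algebra M \<rightarrow>\<^sub>M prob_algebra M"
    unfolding push_def[abs_def] by (rule measurable_distr_prob_space[OF Tm])
  show "Measurable.pred (Zpow M) (\<lambda>x. emp (Tinf T x) = push M T (emp x))"
    by (intro pred_prob_algebra_eq measurable_compose[OF measurable_Tinf[OF Tm] measurable_emp]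
        measurable_compose[OF measurable_emp pushm])
qed

text \<open>Under \<open>iid \<theta>\<close>, a symmetric set \<open>A\<close> is null or conull (Hewitt--Savage), and \<open>emp = \<theta>\<close>
  almost surely; hence membership in \<open>A\<close> is almost surely decided by \<open>iid (emp x) A = 1\<close>.\<close>
lemma symmetric_set_AE_iid:
  assumes \<theta>: "\<theta> \<in> space (prob_algebra M)" and A: "A \<in> symmetric_sets M"
  shows "AE x in iid \<theta>. x \<in> A \<longleftrightarrow> emeasure (iid (emp x)) A = 1"
proof -
  have th: "prob_space \<theta>" "sets \<theta> = sets M" using space_prob_algebraD[OF \<theta>] by blast+
  interpret K: prob_space "iid \<theta>" by (rule prob_space_iid[OF th(1)])
  have AK: "A \<in> sets (iid \<theta>)" using A sets_iid[OF th(2)] by (simp add: symmetric_sets_def)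
  have "measure (iid \<theta>) A = 0 \<or> measure (iid \<theta>) A = 1"
    using A by (intro hewitt_savage[OF th(1) AK]) (simp add: space_iid[OF th(2)] symmetric_sets_def)
  then show ?thesis
  proof (elim disjE)
    assume A0: "measure (iid \<theta>) A = 0"
    then have "A \<in> null_sets (iid \<theta>)" using AK by (simp add: K.emeasure_eq_measure null_sets_def)
    then have "AE x in iid \<theta>. x \<notin> A" by (rule AE_not_in)
    with emp_AE[OF \<theta>] show ?thesis by eventually_elim (use A0 in \<open>simp add: K.emeasure_eq_measure\<close>)
  next
    assume A1: "measure (iid \<theta>) A = 1"
    then have "AE x in iid \<theta>. x \<in> A" using K.AE_in_set_eq_1[OF AK] by simp
    with emp_AE[OF \<theta>] show ?thesis by eventually_elim (use A1 in \<open>simp add: K.emeasure_eq_measure\<close>)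
  qed
qed

lemma symmetric_set_emp_preimage:
  assumes P: "prob_space P" "sets P = sets (prob_algebra M)" and A: "A \<in> symmetric_sets M"
  shows "\<exists>B\<in>sets (prob_algebra M).
    emeasure (Pbar_inf M P) ((A - emp -` B) \<union> ((emp -` B \<inter> space (Zpow M)) - A)) = 0"
proof
  have AZ: "A \<in> sets (Zpow M)" using A by (simp add: symmetric_sets_def)
  define B where "B = {\<theta>\<in>space (prob_algebra M). emeasure (iid \<theta>) A = 1}"
  have "(\<lambda>\<theta>. emeasure (iid \<theta>) A) \<in> borel_measurable (prob_algebra M)"
    by (rule measurable_compose[OF measurable_iid measurable_emeasure_prob_algebra[OF AZ]])
  then show BM: "B \<in> sets (prob_algebra M)" unfolding B_def by measurable
  define S where "S = (A - emp -` B) \<union> ((emp -` B \<inter> space (Zpow M)) - A)"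
  have "emp -` B \<inter> space (Zpow M) \<in> sets (Zpow M)" by (rule measurable_sets[OF measurable_emp BM])
  moreover have "A - emp -` B = A - (emp -` B \<inter> space (Zpow M))"
    using sets.sets_into_space[OF AZ] by blast
  ultimately have SM: "S \<in> sets (Zpow M)" unfolding S_def using AZ by auto
  have "AE x in Pbar_inf M P. x \<notin> S"
  proof (rule AE_Pbar_inf[OF P])
    show "Measurable.pred (Zpow M) (\<lambda>x. x \<notin> S)" using SM by measurable
    fix \<theta> assume \<theta>: "\<theta> \<in> space (prob_algebra M)"
    show "AE x in iid \<theta>. x \<notin> S"
      using symmetric_set_AE_iid[OF \<theta> A]
    proof (rule AE_mp, intro AE_I2 impI)
      fix x assume "x \<in> space (iid \<theta>)" and "x \<in> A \<longleftrightarrow> emeasure (iid (emp x)) A = 1"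
      moreover have "emp x \<in> space (prob_algebra M)"
        using measurable_space[OF measurable_emp_iid[OF \<theta>] \<open>x \<in> space (iid \<theta>)\<close>] .
      ultimately show "x \<notin> S" by (auto simp: S_def B_def)
    qed
  qed
  then show "emeasure (Pbar_inf M P) ((A - emp -` B) \<union> ((emp -` B \<inter> space (Zpow M)) - A)) = 0"
    using AE_iff_measurable[of S "Pbar_inf M P" "\<lambda>x. x \<notin> S"] SM sets.sets_into_space[OF SM]
    unfolding S_def[symmetric] by (auto simp: sets_Pbar_inf space_Pbar_inf)
qed

end

text \<open>The isomorphism is \<open>emp\<close>.\<close>
theorem mainTheorem11:
  fixes M :: "'a measure" and T :: "'a \<Rightarrow> 'a" and P :: "'a measure measure"
  assumes "standard_prob_space M"
    and "automorphism M T"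
    and "P \<in> QF M T"
  shows "\<exists>\<phi>. \<phi> \<in> sigma (space (Zpow M)) (symmetric_sets M) \<rightarrow>\<^sub>M prob_algebra M
           \<and> \<phi> \<in> Zpow M \<rightarrow>\<^sub>M prob_algebra M
           \<and> distr (Pbar_inf M P) (prob_algebra M) \<phi> = P
           \<and> (AE x in Pbar_inf M P. \<phi> (Tinf T x) = push M T (\<phi> x))
           \<and> (\<forall>A\<in>symmetric_sets M. \<exists>B\<in>sets (prob_algebra M).
                emeasure (Pbar_inf M P) ((A - \<phi> -` B) \<union> ((\<phi> -` B \<inter> space (Zpow M)) - A)) = 0)"
proof -
  have pM: "prob_space M" using assms(1) by (simp add: standard_prob_space_def)
  obtain e :: "'a \<Rightarrow> real" and r :: "real \<Rightarrow> 'a" where code: "e \<in> M \<rightarrow>\<^sub>M borel" "r \<in> borel \<rightarrow>\<^sub>M M" "\<And>a. a \<in> space M \<Longrightarrow> r (e a) = a"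
    "\<And>a. 0 < e a" "\<And>a. e a < 1"
    using standard_unit_code[OF assms(1)] by blast
  interpret unit_code M e r by (rule unit_code.intro[OF pM code])
  have T: "T \<in> M \<rightarrow>\<^sub>M M" using assms(2) by (simp add: automorphism_def)
  have P: "prob_space P" "sets P = sets (prob_algebra M)" using assms(3) by (auto simp: QF_def)
  show ?thesis
    by (intro exI[of _ emp] conjI measurable_emp_symmetric measurable_emp distr_Pbar_inf_emp[OF P] emp_Tinf[OF P T]
        ballI symmetric_set_emp_preimage[OF P])
qed

end
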